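(* Fix a $C^0$-concept over $\mathbb{K}$ and let $k\in\mathbb{N}_0\cup\{\infty\}$. Let $E,F,H\in\mathcal{M}$, $U\subseteq E$ and $V\subseteq F$ open, and let $f\colon U\to F$ with $f(U)\subseteq V$ and $g\colon V\to H$ be of class $C^k$. Then $g\circ f\colon U\to H$ is of class $C^k$.
   Context: Let $\mathbb{K}$ be a commutative ring with unit carrying a topology. A $C^0$-concept over $\mathbb{K}$ consists of: (a) a class $\mathcal{M}$ of topologized $\mathbb{K}$-modules with $\mathbb{K}\in\mathcal{M}$; (b) for $E,F\in\mathcal{M}$ and open $U\subseteq E$, a set $C^0(U,F)$ of continuous maps; (c) for $E_1,E_2\in\mathcal{M}$ a topology on $E_1\times E_2$ (not necessarily the product topology) making it a member of $\mathcal{M}$; subject to: (I.1) composites of $C^0$-maps are $C^0$, identities and inclusions of open subsets are $C^0$; (I.2) $x\mapsto rx+b$ is $C^0$; (I.3) $t\mapsto tv+x$ is $C^0$; (I.4) $\mathbb{K}^\times$ is open and inversion is $C^0$; (I.5) $C^0$ is local on open covers; (II.1) projections and $v\mapsto(v,y)$, $w\mapsto(x,w)$ are $C^0$; (II.2) $f_1\times f_2$ is $C^0$ for $C^0$-maps $f_i$; (II.3) diagonals are $C^0$; (II.4) exchange/associativity maps of products are $C^0$ both ways; (II.5) addition and scalar multiplication are $C^0$; (III) a $C^0$-map on open $U\subseteq\mathbb{K}$ is determined by its values on $U\cap\mathbb{K}^\times$. For open $V\subseteq X$, $V^{[1]}=\{(x,v,t)\in V\times X\times\mathbb{K}:x+tv\in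 V\}$; a $C^0$-map $g$ is $C^1$ if there is a $C^0$-map $g^{[1]}\colon V^{[1]}\to Y$ with $g(x+tv)-g(x)=t\,g^{[1]}(x,v,t)$; recursively $V^{[k+1]}=(V^{[k]})^{[1]}$, $g$ is $C^{k+1}$ if $C^k$ and $g^{[k]}$ is $C^1$, $g^{[k+1]}=(g^{[k]})^{[1]}$; $C^\infty$ means $C^k$ for all $k\in\mathbb{N}_0$. *)

theory Defs
  imports "HOL-Analysis.Analysis" "HOL-Library.Extended_Nat"
begin

text \<open>All modules of the class M are encoded as topologized K-modules whose
carriers live in one common universe type 'u.  The ring K is embedded into 'u
by an injection cemb, and pairs are encoded by an injection cpr.\<close>

record ('k, 'u) tmod =
  mcar :: "'u set"
  mzero :: 'u
  madd :: "'u \<Rightarrow> 'u \<Rightarrow> 'u"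
  mneg :: "'u \<Rightarrow> 'u"
  msmul :: "'k \<Rightarrow> 'u \<Rightarrow> 'u"
  mtop :: "'u topology"

record ('k, 'u) c0c =
  cemb :: "'k \<Rightarrow> 'u"
  cKtop :: "'u topology"
  cpr :: "'u \<times> 'u \<Rightarrow> 'u"
  cprodtop :: "('k, 'u) tmod \<Rightarrow> ('k, 'u) tmod \<Rightarrow> 'u topology"
  cM :: "('k, 'u) tmod set"
  cC0 :: "('k, 'u) tmod \<Rightarrow> 'u set \<Rightarrow> ('k, 'u) tmod \<Rightarrow> ('u \<Rightarrow> 'u) \<Rightarrow> bool"

definition tmodule :: "('k::comm_ring_1, 'u) tmod \<Rightarrow> bool" where
  "tmodule E \<longleftrightarrow>
     topspace (mtop E) = mcar E \<and> mzero E \<in> mcar E \<and>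
     (\<forall>x\<in>mcar E. \<forall>y\<in>mcar E. madd E x y \<in> mcar E) \<and>
     (\<forall>x\<in>mcar E. mneg E x \<in> mcar E) \<and>
     (\<forall>r. \<forall>x\<in>mcar E. msmul E r x \<in> mcar E) \<and>
     (\<forall>x\<in>mcar E. \<forall>y\<in>mcar E. \<forall>z\<in>mcar E. madd E (madd E x y) z = madd E x (madd E y z)) \<and>
     (\<forall>x\<in>mcar E. \<forall>y\<in>mcar E. madd E x y = madd E y x) \<and>
     (\<forall>x\<in>mcar E. madd E (mzero E) x = x) \<and>
     (\<forall>x\<in>mcar E. madd E (mneg E x) x = mzero E) \<and>
     (\<forall>r. \<forall>x\<in>mcar E. \<forall>y\<in>mcar E. msmul E r (madd E x y) = madd E (msmul E r x) (msmul E r y)) \<and>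
     (\<forall>r s. \<forall>x\<in>mcar E. msmul E (r + s) x = madd E (msmul E r x) (msmul E s x)) \<and>
     (\<forall>r s. \<forall>x\<in>mcar E. msmul E (r * s) x = msmul E r (msmul E s x)) \<and>
     (\<forall>x\<in>mcar E. msmul E 1 x = x)"

definition kof :: "('k, 'u) c0c \<Rightarrow> 'u \<Rightarrow> 'k" where
  "kof S z = inv (cemb S) z"

text \<open>K itself as a member of M (topology of K transported into 'u).\<close>
definition Kmod :: "('k::comm_ring_1, 'u) c0c \<Rightarrow> ('k, 'u) tmod" where
  "Kmod S = \<lparr> mcar = range (cemb S), mzero = cemb S 0,
     madd = (\<lambda>a b. cemb S (kof S a + kof S b)),
     mneg = (\<lambda>a. cemb S (- kof S a)),
     msmul = (\<lambda>r a. cemb S (r * kof S a)),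
     mtop = cKtop S \<rparr>"

definition pfst :: "('k, 'u) c0c \<Rightarrow> 'u \<Rightarrow> 'u" where
  "pfst S z = fst (inv (cpr S) z)"

definition psnd :: "('k, 'u) c0c \<Rightarrow> 'u \<Rightarrow> 'u" where
  "psnd S z = snd (inv (cpr S) z)"

definition pmod :: "('k, 'u) c0c \<Rightarrow> ('k, 'u) tmod \<Rightarrow> ('k, 'u) tmod \<Rightarrow> ('k, 'u) tmod" where
  "pmod S E1 E2 = \<lparr> mcar = cpr S ` (mcar E1 \<times> mcar E2),
     mzero = cpr S (mzero E1, mzero E2),
     madd = (\<lambda>z w. cpr S (madd E1 (pfst S z) (pfst S w), madd E2 (psnd S z) (psnd S w))),
     mneg = (\<lambda>z. cpr S (mneg E1 (pfst S z), mneg E2 (psnd S z))),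
     msmul = (\<lambda>r z. cpr S (msmul E1 r (pfst S z), msmul E2 r (psnd S z))),
     mtop = cprodtop S E1 E2 \<rparr>"

definition Kunits :: "'k::comm_ring_1 set" where
  "Kunits = {t. \<exists>s. t * s = 1}"

definition kinv :: "'k::comm_ring_1 \<Rightarrow> 'k" where
  "kinv t = (THE s. t * s = 1)"

locale c0_concept =
  fixes S :: "('k::comm_ring_1, 'u) c0c"
  assumes emb_inj: "inj (cemb S)"
    and pr_inj: "inj (cpr S)"
    and Ktop_space: "topspace (cKtop S) = range (cemb S)"
    and M_tmodule: "\<And>E. E \<in> cM S \<Longrightarrow> tmodule E"
    and K_in_M: "Kmod S \<in> cM S"
    and prod_in_M: "\<And>E1 E2. E1 \<in> cM S \<Longrightarrow> E2 \<in> cM S \<Longrightarrow> pmod S E1 E2 \<in> cM S"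
    and C0_wf: "\<And>E U F f. cC0 S E U F f \<Longrightarrow>
       E \<in> cM S \<and> F \<in> cM S \<and> openin (mtop E) U \<and> f ` U \<subseteq> mcar F \<and>
       continuous_map (subtopology (mtop E) U) (mtop F) f"
    and C0_ext: "\<And>E U F f f'. cC0 S E U F f \<Longrightarrow> (\<And>x. x \<in> U \<Longrightarrow> f' x = f x) \<Longrightarrow> cC0 S E U F f'"
    and C0_comp: "\<And>E U F f V H g. cC0 S E U F f \<Longrightarrow> cC0 S F V H g \<Longrightarrow> f ` U \<subseteq> V \<Longrightarrow>
       cC0 S E U H (g \<circ> f)"
    and C0_id: "\<And>E U. E \<in> cM S \<Longrightarrow> openin (mtop E) U \<Longrightarrow> cC0 S E U E id"
    and C0_affine: "\<And>E r b. E \<in> cM S \<Longrightarrow> b \<in> mcar E \<Longrightarrow>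
       cC0 S E (mcar E) E (\<lambda>x. madd E (msmul E r x) b)"
    and C0_line: "\<And>E v x. E \<in> cM S \<Longrightarrow> v \<in> mcar E \<Longrightarrow> x \<in> mcar E \<Longrightarrow>
       cC0 S (Kmod S) (mcar (Kmod S)) E (\<lambda>s. madd E (msmul E (kof S s) v) x)"
    and units_open: "openin (cKtop S) (cemb S ` Kunits)"
    and C0_inv: "cC0 S (Kmod S) (cemb S ` Kunits) (Kmod S) (\<lambda>s. cemb S (kinv (kof S s)))"
    and C0_local: "\<And>E F \<U> f. E \<in> cM S \<Longrightarrow> F \<in> cM S \<Longrightarrow> (\<And>W. W \<in> \<U> \<Longrightarrow> cC0 S E W F f) \<Longrightarrow>
       cC0 S E (\<Union>\<U>) F f"
    and C0_pfst: "\<And>E1 E2. E1 \<in> cM S \<Longrightarrow> E2 \<in> cM S \<Longrightarrow>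
       cC0 S (pmod S E1 E2) (mcar (pmod S E1 E2)) E1 (pfst S)"
    and C0_psnd: "\<And>E1 E2. E1 \<in> cM S \<Longrightarrow> E2 \<in> cM S \<Longrightarrow>
       cC0 S (pmod S E1 E2) (mcar (pmod S E1 E2)) E2 (psnd S)"
    and C0_inl: "\<And>E1 E2 y. E1 \<in> cM S \<Longrightarrow> E2 \<in> cM S \<Longrightarrow> y \<in> mcar E2 \<Longrightarrow>
       cC0 S E1 (mcar E1) (pmod S E1 E2) (\<lambda>v. cpr S (v, y))"
    and C0_inr: "\<And>E1 E2 x. E1 \<in> cM S \<Longrightarrow> E2 \<in> cM S \<Longrightarrow> x \<in> mcar E1 \<Longrightarrow>
       cC0 S E2 (mcar E2) (pmod S E1 E2) (\<lambda>w. cpr S (x, w))"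
    and C0_prod: "\<And>E1 U1 F1 f1 E2 U2 F2 f2. cC0 S E1 U1 F1 f1 \<Longrightarrow> cC0 S E2 U2 F2 f2 \<Longrightarrow>
       cC0 S (pmod S E1 E2) (cpr S ` (U1 \<times> U2)) (pmod S F1 F2)
         (\<lambda>z. cpr S (f1 (pfst S z), f2 (psnd S z)))"
    and C0_diag: "\<And>E. E \<in> cM S \<Longrightarrow> cC0 S E (mcar E) (pmod S E E) (\<lambda>x. cpr S (x, x))"
    and C0_swap: "\<And>E1 E2. E1 \<in> cM S \<Longrightarrow> E2 \<in> cM S \<Longrightarrow>
       cC0 S (pmod S E1 E2) (mcar (pmod S E1 E2)) (pmod S E2 E1) (\<lambda>z. cpr S (psnd S z, pfst S z))"
    and C0_assoc: "\<And>E1 E2 E3. E1 \<in> cM S \<Longrightarrow> E2 \<in> cM S \<Longrightarrow> E3 \<in> cM S \<Longrightarrow>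
       cC0 S (pmod S (pmod S E1 E2) E3) (mcar (pmod S (pmod S E1 E2) E3)) (pmod S E1 (pmod S E2 E3))
         (\<lambda>z. cpr S (pfst S (pfst S z), cpr S (psnd S (pfst S z), psnd S z)))"
    and C0_assoc': "\<And>E1 E2 E3. E1 \<in> cM S \<Longrightarrow> E2 \<in> cM S \<Longrightarrow> E3 \<in> cM S \<Longrightarrow>
       cC0 S (pmod S E1 (pmod S E2 E3)) (mcar (pmod S E1 (pmod S E2 E3))) (pmod S (pmod S E1 E2) E3)
         (\<lambda>z. cpr S (cpr S (pfst S z, pfst S (psnd S z)), psnd S (psnd S z)))"
    and C0_add: "\<And>E. E \<in> cM S \<Longrightarrow>
       cC0 S (pmod S E E) (mcar (pmod S E E)) E (\<lambda>z. madd E (pfst S z) (psnd S z))"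
    and C0_smul: "\<And>E. E \<in> cM S \<Longrightarrow>
       cC0 S (pmod S (Kmod S) E) (mcar (pmod S (Kmod S) E)) E
         (\<lambda>z. msmul E (kof S (pfst S z)) (psnd S z))"
    \<comment> \<open>(III)\<close>
    and C0_ident: "\<And>U F f g z. cC0 S (Kmod S) U F f \<Longrightarrow> cC0 S (Kmod S) U F g \<Longrightarrow>
       (\<And>w. w \<in> U \<inter> cemb S ` Kunits \<Longrightarrow> f w = g w) \<Longrightarrow> z \<in> U \<Longrightarrow> f z = g z"

definition trip :: "('k, 'u) c0c \<Rightarrow> 'u \<Rightarrow> 'u \<Rightarrow> 'k \<Rightarrow> 'u" where
  "trip S x v t = cpr S (x, cpr S (v, cemb S t))"

definition Dmod :: "('k::comm_ring_1, 'u) c0c \<Rightarrow> ('k, 'u) tmod \<Rightarrow> ('k, 'u) tmod" where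
  "Dmod S E = pmod S E (pmod S E (Kmod S))"

definition Dset :: "('k, 'u) c0c \<Rightarrow> ('k, 'u) tmod \<Rightarrow> 'u set \<Rightarrow> 'u set" where
  "Dset S E V = {trip S x v t | x v t. x \<in> V \<and> v \<in> mcar E \<and> madd E x (msmul E t v) \<in> V}"

definition is_der :: "('k::comm_ring_1, 'u) c0c \<Rightarrow> ('k, 'u) tmod \<Rightarrow> 'u set \<Rightarrow> ('k, 'u) tmod
    \<Rightarrow> ('u \<Rightarrow> 'u) \<Rightarrow> ('u \<Rightarrow> 'u) \<Rightarrow> bool" where
  "is_der S E V F g g1 \<longleftrightarrow> cC0 S (Dmod S E) (Dset S E V) F g1 \<and>
     (\<forall>x v t. x \<in> V \<and> v \<in> mcar E \<and> madd E x (msmul E t v) \<in> V \<longrightarrow>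
        madd F (g (madd E x (msmul E t v))) (mneg F (g x)) = msmul F t (g1 (trip S x v t)))"

definition isC1 :: "('k::comm_ring_1, 'u) c0c \<Rightarrow> ('k, 'u) tmod \<Rightarrow> 'u set \<Rightarrow> ('k, 'u) tmod
    \<Rightarrow> ('u \<Rightarrow> 'u) \<Rightarrow> bool" where
  "isC1 S E V F g \<longleftrightarrow> cC0 S E V F g \<and> (\<exists>g1. is_der S E V F g g1)"

text \<open>g^[1] (chosen; unique on V^[1] by (III)).\<close>
definition der :: "('k::comm_ring_1, 'u) c0c \<Rightarrow> ('k, 'u) tmod \<Rightarrow> 'u set \<Rightarrow> ('k, 'u) tmod
    \<Rightarrow> ('u \<Rightarrow> 'u) \<Rightarrow> ('u \<Rightarrow> 'u)" where
  "der S E V F g = (SOME g1. is_der S E V F g g1)"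

definition dstep :: "('k::comm_ring_1, 'u) c0c \<Rightarrow> ('k, 'u) tmod
    \<Rightarrow> ('k, 'u) tmod \<times> 'u set \<times> ('u \<Rightarrow> 'u) \<Rightarrow> ('k, 'u) tmod \<times> 'u set \<times> ('u \<Rightarrow> 'u)" where
  "dstep S F = (\<lambda>(E, V, g). (Dmod S E, Dset S E V, der S E V F g))"

primrec isCn :: "('k::comm_ring_1, 'u) c0c \<Rightarrow> nat \<Rightarrow> ('k, 'u) tmod \<Rightarrow> 'u set \<Rightarrow> ('k, 'u) tmod
    \<Rightarrow> ('u \<Rightarrow> 'u) \<Rightarrow> bool" where
  "isCn S 0 E V F g = cC0 S E V F g"
| "isCn S (Suc n) E V F g = (isCn S n E V F g \<and>
     (case (dstep S F ^^ n) (E, V, g) of (E', V', g') \<Rightarrow> isC1 S E' V' F g'))"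

definition isCk :: "('k::comm_ring_1, 'u) c0c \<Rightarrow> enat \<Rightarrow> ('k, 'u) tmod \<Rightarrow> 'u set \<Rightarrow> ('k, 'u) tmod
    \<Rightarrow> ('u \<Rightarrow> 'u) \<Rightarrow> bool" where
  "isCk S k E V F g = (case k of enat n \<Rightarrow> isCn S n E V F g | \<infinity> \<Rightarrow> (\<forall>n. isCn S n E V F g))"

end

theory Submission
  imports Defs
begin

text \<open>If f is C^1 then f(x + t v) = f x + t f^[1](x, v, t), so
  (g \<circ> f)^[1] = g^[1] \<circ> \<phi> with \<phi>(x, v, t) = (f x, f^[1](x, v, t), t).  For f, g of class
  C^(n+1) the components f \<circ> pr1, f^[1] and pr3 of \<phi> are C^n (the first by the induction
  hypothesis, the last being continuous linear), hence so is g^[1] \<circ> \<phi>, again by the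
  induction hypothesis.  Since C^(n+1) is defined through one chosen g^[1], axiom (III) is
  needed to see that g^[1] is unique on V^[1], so that any witness may be used.\<close>

lemma tmodule_closed:
  assumes "tmodule E"
  shows tmodule_topspace: "topspace (mtop E) = mcar E"
    and tmodule_add_closed: "x \<in> mcar E \<Longrightarrow> y \<in> mcar E \<Longrightarrow> madd E x y \<in> mcar E"
    and tmodule_smul_closed: "x \<in> mcar E \<Longrightarrow> msmul E r x \<in> mcar E"
  using assms unfolding tmodule_def by auto

lemma tmodule_add_neg_cancel:
  assumes "tmodule E" "a \<in> mcar E" "b \<in> mcar E"
  shows "madd E (madd E a b) (mneg E a) = b"
proof -
  from assms(1) have
    assoc: "\<forall>x\<in>mcar E. \<forall>y\<in>mcar E. \<forall>z\<in>mcar E. madd E (madd E x y) z = madd E x (madd E y z)"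
    and comm: "\<forall>x\<in>mcar E. \<forall>y\<in>mcar E. madd E x y = madd E y x"
    and zero: "mzero E \<in> mcar E" "\<forall>x\<in>mcar E. madd E (mzero E) x = x"
    and neg: "\<forall>x\<in>mcar E. mneg E x \<in> mcar E" "\<forall>x\<in>mcar E. madd E (mneg E x) x = mzero E"
    unfolding tmodule_def by auto
  have "madd E (madd E a b) (mneg E a) = madd E b (madd E (mneg E a) a)"
    using assms assoc comm neg by metis
  also have "\<dots> = b" using assms comm zero neg by metis
  finally show ?thesis .
qed

lemma tmodule_add_diff:
  assumes "tmodule E" "a \<in> mcar E" "b \<in> mcar E"
  shows "madd E a (madd E b (mneg E a)) = b"
proof -
  from assms(1) have
    assoc: "\<forall>x\<in>mcar E. \<forall>y\<in>mcar E. \<forall>z\<in>mcar E. madd E (madd E x y) z = madd E x (madd E y z)"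
    and neg: "\<forall>x\<in>mcar E. mneg E x \<in> mcar E"
    unfolding tmodule_def by auto
  then have "madd E a (madd E b (mneg E a)) = madd E (madd E a b) (mneg E a)"
    using assms by auto
  then show ?thesis using tmodule_add_neg_cancel[OF assms] by simp
qed

lemma tmodule_smul_cancel_unit:
  assumes "tmodule E" "a \<in> mcar E" "b \<in> mcar E" "t * s = 1" "msmul E t a = msmul E t b"
  shows "a = b"
proof -
  from assms(1) have mult: "\<forall>r s. \<forall>x\<in>mcar E. msmul E (r * s) x = msmul E r (msmul E s x)"
    and one: "\<forall>x\<in>mcar E. msmul E 1 x = x"
    unfolding tmodule_def by auto
  have st: "s * t = 1" using assms(4) by (simp add: mult.commute)
  have "a = msmul E s (msmul E t a)" using assms(2) mult one st by metis
  also have "\<dots> = b" using assms(3,5) mult one st by metis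
  finally show ?thesis .
qed

context c0_concept
begin

lemma pfst_cpr [simp]: "pfst S (cpr S (a, b)) = a"
  unfolding pfst_def using pr_inj by (simp add: inv_f_f)

lemma psnd_cpr [simp]: "psnd S (cpr S (a, b)) = b"
  unfolding psnd_def using pr_inj by (simp add: inv_f_f)

lemma kof_cemb [simp]: "kof S (cemb S t) = t"
  unfolding kof_def using emb_inj by (simp add: inv_f_f)

lemma mcar_Kmod [simp]: "mcar (Kmod S) = range (cemb S)"
  by (simp add: Kmod_def)

lemma mcar_pmod [simp]: "mcar (pmod S A B) = cpr S ` (mcar A \<times> mcar B)"
  by (simp add: pmod_def)

lemma pmod_ops [simp]:
  "madd (pmod S A B) z w = cpr S (madd A (pfst S z) (pfst S w), madd B (psnd S z) (psnd S w))"
  "mneg (pmod S A B) z = cpr S (mneg A (pfst S z), mneg B (psnd S z))"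
  "msmul (pmod S A B) r z = cpr S (msmul A r (pfst S z), msmul B r (psnd S z))"
  by (simp_all add: pmod_def)

lemma trip_in_mcar_Dmod_iff [simp]:
  "trip S x v t \<in> mcar (Dmod S E) \<longleftrightarrow> x \<in> mcar E \<and> v \<in> mcar E"
  by (auto simp: trip_def Dmod_def inj_eq[OF pr_inj])

lemma trip_in_Dset_iff [simp]:
  "trip S x v t \<in> Dset S E V \<longleftrightarrow> x \<in> V \<and> v \<in> mcar E \<and> madd E x (msmul E t v) \<in> V"
  by (auto simp: Dset_def trip_def inj_eq[OF pr_inj] inj_eq[OF emb_inj])

lemma pfst_Dset: "pfst S ` Dset S E V \<subseteq> V"
  by (auto simp: Dset_def trip_def)

lemma Dmod_in_M: "E \<in> cM S \<Longrightarrow> Dmod S E \<in> cM S"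
  unfolding Dmod_def by (intro prod_in_M K_in_M)

lemma openin_subset_mcar: "E \<in> cM S \<Longrightarrow> openin (mtop E) U \<Longrightarrow> U \<subseteq> mcar E"
  using openin_subset tmodule_topspace M_tmodule by metis

lemma C0_restrict:
  assumes g: "cC0 S E V F g" and W: "openin (mtop E) W" and WV: "W \<subseteq> V"
  shows "cC0 S E W F g"
proof -
  have "E \<in> cM S" using C0_wf[OF g] by auto
  then have "cC0 S E W F (g \<circ> id)"
    by (rule C0_comp[OF C0_id[OF _ W] g]) (use WV in auto)
  then show ?thesis by simp
qed

lemma C0_pair:
  assumes a: "cC0 S E W F1 a" and b: "cC0 S E W F2 b"
  shows "cC0 S E W (pmod S F1 F2) (\<lambda>z. cpr S (a z, b z))"
proof -
  from C0_wf[OF a] have E: "E \<in> cM S" and W: "openin (mtop E) W" by auto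
  have diag: "cC0 S E W (pmod S E E) (\<lambda>x. cpr S (x, x))"
    using C0_restrict[OF C0_diag[OF E] W openin_subset_mcar[OF E W]] .
  have "cC0 S E W (pmod S F1 F2) ((\<lambda>z. cpr S (a (pfst S z), b (psnd S z))) \<circ> (\<lambda>x. cpr S (x, x)))"
    by (rule C0_comp[OF diag C0_prod[OF a b]]) auto
  then show ?thesis by (rule C0_ext) simp
qed

lemma openin_C0_preimage:
  assumes f: "cC0 S E (mcar E) F f" and W: "openin (mtop F) W"
  shows "openin (mtop E) {z \<in> mcar E. f z \<in> W}"
proof -
  from C0_wf[OF f] have "E \<in> cM S" and "continuous_map (subtopology (mtop E) (mcar E)) (mtop F) f"
    by auto
  then have "continuous_map (mtop E) (mtop F) f" and "topspace (mtop E) = mcar E"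
    using tmodule_topspace M_tmodule by (metis subtopology_topspace)+
  then show ?thesis using openin_continuous_map_preimage[OF _ W] by metis
qed

definition clinear :: "('k, 'u) tmod \<Rightarrow> ('k, 'u) tmod \<Rightarrow> ('u \<Rightarrow> 'u) \<Rightarrow> bool" where
  "clinear E F L \<longleftrightarrow> E \<in> cM S \<and> F \<in> cM S \<and> cC0 S E (mcar E) F L \<and>
    (\<forall>x\<in>mcar E. \<forall>y\<in>mcar E. L (madd E x y) = madd F (L x) (L y)) \<and>
    (\<forall>t. \<forall>x\<in>mcar E. L (msmul E t x) = msmul F t (L x))"

lemma clinear_pfst: "A \<in> cM S \<Longrightarrow> B \<in> cM S \<Longrightarrow> clinear (pmod S A B) A (pfst S)"
  unfolding clinear_def using prod_in_M C0_pfst by auto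

lemma clinear_psnd: "A \<in> cM S \<Longrightarrow> B \<in> cM S \<Longrightarrow> clinear (pmod S A B) B (psnd S)"
  unfolding clinear_def using prod_in_M C0_psnd by auto

lemma clinear_comp:
  assumes L1: "clinear E F L1" and L2: "clinear F G L2"
  shows "clinear E G (\<lambda>x. L2 (L1 x))"
proof -
  have c1: "cC0 S E (mcar E) F L1" and c2: "cC0 S F (mcar F) G L2"
    using L1 L2 by (auto simp: clinear_def)
  have im: "L1 ` mcar E \<subseteq> mcar F" using C0_wf[OF c1] by auto
  have "cC0 S E (mcar E) G (L2 \<circ> L1)" by (rule C0_comp[OF c1 c2 im])
  moreover have "F \<in> cM S" using L1 by (simp add: clinear_def)
  ultimately show ?thesis
    using L1 L2 im tmodule_add_closed tmodule_smul_closed M_tmodule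
    unfolding clinear_def by (auto simp: o_def image_subset_iff)
qed

lemma clinear_C0: "clinear E F L \<Longrightarrow> cC0 S E (mcar E) F L"
  by (simp add: clinear_def)

lemma clinear_C0_on: "clinear E F L \<Longrightarrow> openin (mtop E) W \<Longrightarrow> cC0 S E W F L"
  unfolding clinear_def using C0_restrict openin_subset_mcar by blast

lemma clinear_Dmod_projections:
  assumes E: "E \<in> cM S"
  shows clinear_Dmod_base: "clinear (Dmod S E) E (pfst S)"
    and clinear_Dmod_dir: "clinear (Dmod S E) E (\<lambda>z. pfst S (psnd S z))"
    and clinear_Dmod_scalar: "clinear (Dmod S E) (Kmod S) (\<lambda>z. psnd S (psnd S z))"
proof -
  have K: "Kmod S \<in> cM S" by (rule K_in_M)
  have P: "pmod S E (Kmod S) \<in> cM S" using E K by (rule prod_in_M)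
  show "clinear (Dmod S E) E (pfst S)"
    unfolding Dmod_def by (rule clinear_pfst[OF E P])
  show "clinear (Dmod S E) E (\<lambda>z. pfst S (psnd S z))"
    unfolding Dmod_def by (rule clinear_comp[OF clinear_psnd[OF E P] clinear_pfst[OF E K]])
  show "clinear (Dmod S E) (Kmod S) (\<lambda>z. psnd S (psnd S z))"
    unfolding Dmod_def by (rule clinear_comp[OF clinear_psnd[OF E P] clinear_psnd[OF E K]])
qed

lemma C0_Dmod_endpoint:
  assumes E: "E \<in> cM S"
  shows "cC0 S (Dmod S E) (mcar (Dmod S E)) E
           (\<lambda>z. madd E (pfst S z) (msmul E (kof S (psnd S (psnd S z))) (pfst S (psnd S z))))"
    (is "cC0 S ?D _ E ?end")
proof -
  let ?tv = "\<lambda>z. cpr S (psnd S (psnd S z), pfst S (psnd S z))"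
  let ?xtv = "\<lambda>z. cpr S (pfst S z, msmul E (kof S (psnd S (psnd S z))) (pfst S (psnd S z)))"
  have tv: "cC0 S ?D (mcar ?D) (pmod S (Kmod S) E) ?tv"
    by (rule C0_pair[OF clinear_C0[OF clinear_Dmod_scalar[OF E]] clinear_C0[OF clinear_Dmod_dir[OF E]]])
  have "cC0 S ?D (mcar ?D) E ((\<lambda>z. msmul E (kof S (pfst S z)) (psnd S z)) \<circ> ?tv)"
    by (rule C0_comp[OF tv C0_smul[OF E]]) (use C0_wf[OF tv] in auto)
  then have "cC0 S ?D (mcar ?D) E (\<lambda>z. msmul E (kof S (psnd S (psnd S z))) (pfst S (psnd S z)))"
    by (rule C0_ext) simp
  then have xtv: "cC0 S ?D (mcar ?D) (pmod S E E) ?xtv"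
    by (rule C0_pair[OF clinear_C0[OF clinear_Dmod_base[OF E]]])
  have "cC0 S ?D (mcar ?D) E ((\<lambda>z. madd E (pfst S z) (psnd S z)) \<circ> ?xtv)"
    by (rule C0_comp[OF xtv C0_add[OF E]]) (use C0_wf[OF xtv] in auto)
  then show ?thesis by (rule C0_ext) simp
qed

lemma openin_Dset:
  assumes E: "E \<in> cM S" and V: "openin (mtop E) V"
  shows "openin (mtop (Dmod S E)) (Dset S E V)"
proof -
  let ?D = "Dmod S E"
  let ?end = "\<lambda>z. madd E (pfst S z) (msmul E (kof S (psnd S (psnd S z))) (pfst S (psnd S z)))"
  have "z \<in> Dset S E V \<longleftrightarrow> pfst S z \<in> V \<and> ?end z \<in> V" if "z \<in> mcar ?D" for z
  proof -
    from that obtain x v t where "z = trip S x v t" "v \<in> mcar E" by (auto simp: Dmod_def trip_def)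
    then show ?thesis using trip_in_Dset_iff[of x v t E V] by (simp add: trip_def)
  qed
  moreover have "Dset S E V \<subseteq> mcar ?D"
    using openin_subset_mcar[OF E V] by (auto simp: Dset_def)
  ultimately have "Dset S E V = {z \<in> mcar ?D. pfst S z \<in> V} \<inter> {z \<in> mcar ?D. ?end z \<in> V}"
    by blast
  then show ?thesis
    using openin_Int[OF openin_C0_preimage[OF clinear_C0[OF clinear_Dmod_base[OF E]] V]
        openin_C0_preimage[OF C0_Dmod_endpoint[OF E] V]] by simp
qed

lemma C0_trip_line:
  assumes E: "E \<in> cM S" and x: "x \<in> mcar E" and v: "v \<in> mcar E"
  shows "cC0 S (Kmod S) (mcar (Kmod S)) (Dmod S E) (\<lambda>s. cpr S (x, cpr S (v, s)))"
proof -
  have K: "Kmod S \<in> cM S" by (rule K_in_M)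
  have "cC0 S (Kmod S) (mcar (Kmod S)) (Dmod S E) ((\<lambda>w. cpr S (x, w)) \<circ> (\<lambda>s. cpr S (v, s)))"
    unfolding Dmod_def
    by (rule C0_comp[OF C0_inr[OF E K v] C0_inr[OF E prod_in_M[OF E K] x]])
      (use v in \<open>simp add: image_subset_iff\<close>)
  then show ?thesis by (simp add: o_def)
qed

text \<open>Uniqueness of g^[1] on V^[1]: along the line s \<mapsto> (x, v, s) the two candidates agree
  wherever s is a unit (cancel s in the defining equation), hence everywhere by (III).\<close>
lemma is_der_unique:
  assumes E: "E \<in> cM S" and d1: "is_der S E V F g g1" and d2: "is_der S E V F g g2"
    and z: "z \<in> Dset S E V"
  shows "g1 z = g2 z"
proof -
  have c1: "cC0 S (Dmod S E) (Dset S E V) F g1" and c2: "cC0 S (Dmod S E) (Dset S E V) F g2"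
    using d1 d2 by (simp_all add: is_der_def)
  have F: "F \<in> cM S" and Do: "openin (mtop (Dmod S E)) (Dset S E V)" using C0_wf[OF c1] by auto
  obtain x v t0 where z_eq: "z = trip S x v t0" using z by (auto simp: Dset_def)
  have "z \<in> mcar (Dmod S E)" using z openin_subset_mcar[OF Dmod_in_M[OF E] Do] by auto
  then have x: "x \<in> mcar E" and v: "v \<in> mcar E" by (simp_all add: z_eq)
  define \<tau> where "\<tau> = (\<lambda>s. cpr S (x, cpr S (v, s)))"
  have \<tau>_cemb: "\<tau> (cemb S t) = trip S x v t" for t by (simp add: \<tau>_def trip_def)
  define Ux where "Ux = {s \<in> mcar (Kmod S). \<tau> s \<in> Dset S E V}"
  have \<tau>: "cC0 S (Kmod S) (mcar (Kmod S)) (Dmod S E) \<tau>"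
    unfolding \<tau>_def by (rule C0_trip_line[OF E x v])
  have Ux: "openin (mtop (Kmod S)) Ux"
    unfolding Ux_def by (rule openin_C0_preimage[OF \<tau> Do])
  have \<tau>_Ux: "cC0 S (Kmod S) Ux (Dmod S E) \<tau>" by (rule C0_restrict[OF \<tau> Ux]) (auto simp: Ux_def)
  have e1: "cC0 S (Kmod S) Ux F (g1 \<circ> \<tau>)" by (rule C0_comp[OF \<tau>_Ux c1]) (auto simp: Ux_def)
  have e2: "cC0 S (Kmod S) Ux F (g2 \<circ> \<tau>)" by (rule C0_comp[OF \<tau>_Ux c2]) (auto simp: Ux_def)
  have "(g1 \<circ> \<tau>) (cemb S t0) = (g2 \<circ> \<tau>) (cemb S t0)"
  proof (rule C0_ident[OF e1 e2])
    fix w assume w: "w \<in> Ux \<inter> cemb S ` Kunits"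
    then obtain t s where w_eq: "w = cemb S t" and ts: "t * s = 1" by (auto simp: Kunits_def)
    have tr: "trip S x v t \<in> Dset S E V" using w by (simp add: Ux_def w_eq \<tau>_cemb)
    then have "msmul F t (g1 (trip S x v t)) = msmul F t (g2 (trip S x v t))"
      using d1 d2 unfolding is_der_def by (metis trip_in_Dset_iff)
    moreover have "g1 (trip S x v t) \<in> mcar F" "g2 (trip S x v t) \<in> mcar F"
      using tr C0_wf[OF c1] C0_wf[OF c2] by auto
    ultimately have "g1 (trip S x v t) = g2 (trip S x v t)"
      using tmodule_smul_cancel_unit[OF M_tmodule[OF F] _ _ ts] by blast
    then show "(g1 \<circ> \<tau>) w = (g2 \<circ> \<tau>) w" by (simp add: w_eq \<tau>_cemb)
  next
    show "cemb S t0 \<in> Ux" using z by (simp add: Ux_def z_eq \<tau>_cemb)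
  qed
  then show ?thesis by (simp add: z_eq \<tau>_cemb)
qed

lemma funpow_dstep_Suc:
  "(dstep S F ^^ Suc n) (E, V, g) = (dstep S F ^^ n) (Dmod S E, Dset S E V, der S E V F g)"
  by (simp add: funpow_Suc_right dstep_def del: funpow.simps)

lemma der_is_der: "isC1 S E V F g \<Longrightarrow> is_der S E V F g (der S E V F g)"
  unfolding isC1_def der_def by (metis someI)

lemma isCn_Suc_iff:
  "isCn S (Suc n) E V F g \<longleftrightarrow> isC1 S E V F g \<and> isCn S n (Dmod S E) (Dset S E V) F (der S E V F g)"
proof (induction n arbitrary: E V g)
  case 0
  show ?case using der_is_der[of E V F g] by (auto simp: isC1_def is_der_def)
next
  case (Suc n)
  have "isCn S (Suc (Suc n)) E V F g \<longleftrightarrow> isCn S (Suc n) E V F g \<and>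
     (case (dstep S F ^^ Suc n) (E, V, g) of (E', V', g') \<Rightarrow> isC1 S E' V' F g')"
    by (simp only: isCn.simps(2))
  also have "\<dots> \<longleftrightarrow> (isC1 S E V F g \<and> isCn S n (Dmod S E) (Dset S E V) F (der S E V F g)) \<and>
     (case (dstep S F ^^ n) (Dmod S E, Dset S E V, der S E V F g) of (E', V', g') \<Rightarrow> isC1 S E' V' F g')"
    using Suc.IH funpow_dstep_Suc by simp
  also have "\<dots> \<longleftrightarrow> isC1 S E V F g \<and> isCn S (Suc n) (Dmod S E) (Dset S E V) F (der S E V F g)"
    by (simp only: isCn.simps(2) conj_assoc)
  finally show ?case .
qed

lemma isCn_cong:
  assumes "isCn S n E V F g" "\<And>x. x \<in> V \<Longrightarrow> g x = g' x"
  shows "isCn S n E V F g'"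
proof (cases n)
  case 0
  then show ?thesis using assms C0_ext[of E V F g g'] by auto
next
  case (Suc m)
  have der: "is_der S E V F g = is_der S E V F g'"
    using assms(2) by (auto simp: is_der_def fun_eq_iff)
  then have "der S E V F g = der S E V F g'" by (simp add: der_def)
  moreover have "isC1 S E V F g = isC1 S E V F g'"
    unfolding isC1_def der using C0_ext[of E V F g g'] C0_ext[of E V F g' g] assms(2) by auto
  ultimately show ?thesis using assms(1) unfolding Suc isCn_Suc_iff by simp
qed

lemma isCn_Suc_iff_is_der:
  "isCn S (Suc n) E V F g \<longleftrightarrow>
     cC0 S E V F g \<and> (\<exists>g1. is_der S E V F g g1 \<and> isCn S n (Dmod S E) (Dset S E V) F g1)"
proof
  assume "isCn S (Suc n) E V F g"
  then have "isC1 S E V F g" "isCn S n (Dmod S E) (Dset S E V) F (der S E V F g)"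
    by (simp_all only: isCn_Suc_iff)
  then show "cC0 S E V F g \<and> (\<exists>g1. is_der S E V F g g1 \<and> isCn S n (Dmod S E) (Dset S E V) F g1)"
    using der_is_der isC1_def by blast
next
  assume "cC0 S E V F g \<and> (\<exists>g1. is_der S E V F g g1 \<and> isCn S n (Dmod S E) (Dset S E V) F g1)"
  then obtain g1 where g: "cC0 S E V F g" and d: "is_der S E V F g g1"
    and n: "isCn S n (Dmod S E) (Dset S E V) F g1" by blast
  have C1: "isC1 S E V F g" using g d by (auto simp: isC1_def)
  have "isCn S n (Dmod S E) (Dset S E V) F (der S E V F g)"
    using isCn_cong[OF n] is_der_unique[OF _ d der_is_der[OF C1]] C0_wf[OF g] by blast
  then show "isCn S (Suc n) E V F g" using C1 by (simp only: isCn_Suc_iff)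
qed

lemma clinear_is_der:
  assumes L: "clinear E F L" and V: "openin (mtop E) V"
  shows "is_der S E V F L (\<lambda>z. L (pfst S (psnd S z)))"
  unfolding is_der_def
proof (intro conjI allI impI)
  have E: "E \<in> cM S" and F: "F \<in> cM S" using L by (auto simp: clinear_def)
  show "cC0 S (Dmod S E) (Dset S E V) F (\<lambda>z. L (pfst S (psnd S z)))"
    by (rule clinear_C0_on[OF clinear_comp[OF clinear_Dmod_dir[OF E] L] openin_Dset[OF E V]])
  fix x v t assume xvt: "x \<in> V \<and> v \<in> mcar E \<and> madd E x (msmul E t v) \<in> V"
  then have x: "x \<in> mcar E" and v: "v \<in> mcar E" using openin_subset_mcar[OF E V] by auto
  have "L (madd E x (msmul E t v)) = madd F (L x) (msmul F t (L v))"
    using L x v tmodule_smul_closed[OF M_tmodule[OF E]] unfolding clinear_def by auto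
  moreover have "L x \<in> mcar F" "msmul F t (L v) \<in> mcar F"
    using L x v tmodule_smul_closed[OF M_tmodule[OF F]] C0_wf unfolding clinear_def by blast+
  ultimately show "madd F (L (madd E x (msmul E t v))) (mneg F (L x)) =
      msmul F t (L (pfst S (psnd S (trip S x v t))))"
    using tmodule_add_neg_cancel[OF M_tmodule[OF F]] by (simp add: trip_def)
qed

lemma clinear_isCn: "clinear E F L \<Longrightarrow> openin (mtop E) V \<Longrightarrow> isCn S n E V F L"
proof (induction n arbitrary: E F L V)
  case 0
  then show ?case by (simp add: clinear_C0_on)
next
  case (Suc n)
  have E: "E \<in> cM S" using Suc.prems by (simp add: clinear_def)
  have "clinear (Dmod S E) F (\<lambda>z. L (pfst S (psnd S z)))"
    by (rule clinear_comp[OF clinear_Dmod_dir[OF E] Suc.prems(1)])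
  then have "isCn S n (Dmod S E) (Dset S E V) F (\<lambda>z. L (pfst S (psnd S z)))"
    by (rule Suc.IH[OF _ openin_Dset[OF E Suc.prems(2)]])
  then show ?case
    unfolding isCn_Suc_iff_is_der using clinear_C0_on[OF Suc.prems] clinear_is_der[OF Suc.prems]
    by blast
qed

lemma is_der_pair:
  "is_der S E W F1 a a1 \<Longrightarrow> is_der S E W F2 b b1 \<Longrightarrow>
   is_der S E W (pmod S F1 F2) (\<lambda>z. cpr S (a z, b z)) (\<lambda>z. cpr S (a1 z, b1 z))"
  using C0_pair by (simp add: is_der_def)

lemma isCn_pair:
  "isCn S n E W F1 a \<Longrightarrow> isCn S n E W F2 b \<Longrightarrow> isCn S n E W (pmod S F1 F2) (\<lambda>z. cpr S (a z, b z))"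
proof (induction n arbitrary: E W a b)
  case 0
  then show ?case using C0_pair by simp
next
  case (Suc n)
  from Suc.prems obtain a1 b1 where a: "cC0 S E W F1 a" "is_der S E W F1 a a1"
    "isCn S n (Dmod S E) (Dset S E W) F1 a1"
    and b: "cC0 S E W F2 b" "is_der S E W F2 b b1" "isCn S n (Dmod S E) (Dset S E W) F2 b1"
    unfolding isCn_Suc_iff_is_der by blast
  show ?case
    unfolding isCn_Suc_iff_is_der
    using C0_pair[OF a(1) b(1)] is_der_pair[OF a(2) b(2)] Suc.IH[OF a(3) b(3)] by blast
qed

definition chain_map :: "('u \<Rightarrow> 'u) \<Rightarrow> ('u \<Rightarrow> 'u) \<Rightarrow> 'u \<Rightarrow> 'u" where
  "chain_map f f1 = (\<lambda>z. cpr S (f (pfst S z), cpr S (f1 z, psnd S (psnd S z))))"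

lemma chain_map_trip [simp]:
  "chain_map f f1 (trip S x v t) = trip S (f x) (f1 (trip S x v t)) t"
  by (simp add: chain_map_def trip_def)

lemma is_der_expand:
  assumes f: "cC0 S E U F f" and d: "is_der S E U F f f1"
    and xvt: "x \<in> U" "v \<in> mcar E" "madd E x (msmul E t v) \<in> U"
  shows "f (madd E x (msmul E t v)) = madd F (f x) (msmul F t (f1 (trip S x v t)))"
proof -
  have F: "F \<in> cM S" and fU: "f ` U \<subseteq> mcar F" using C0_wf[OF f] by auto
  have "f (madd E x (msmul E t v)) = madd F (f x) (madd F (f (madd E x (msmul E t v))) (mneg F (f x)))"
    by (rule tmodule_add_diff[OF M_tmodule[OF F], symmetric]) (use fU xvt in auto)
  also have "\<dots> = madd F (f x) (msmul F t (f1 (trip S x v t)))"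
    using d xvt unfolding is_der_def by simp
  finally show ?thesis .
qed

lemma chain_map_Dset:
  assumes f: "cC0 S E U F f" and d: "is_der S E U F f f1" and fUV: "f ` U \<subseteq> V"
  shows "chain_map f f1 ` Dset S E U \<subseteq> Dset S F V"
proof
  fix w assume "w \<in> chain_map f f1 ` Dset S E U"
  then obtain x v t where w: "w = chain_map f f1 (trip S x v t)"
    and xvt: "x \<in> U" "v \<in> mcar E" "madd E x (msmul E t v) \<in> U"
    by (auto simp: Dset_def)
  have "f1 (trip S x v t) \<in> mcar F"
    using C0_wf d xvt unfolding is_der_def by (metis image_subset_iff trip_in_Dset_iff)
  then show "w \<in> Dset S F V"
    using w fUV xvt is_der_expand[OF f d xvt] by auto
qed

lemma isCn_chain_map:
  assumes E: "E \<in> cM S" and U: "openin (mtop E) U"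
    and f: "isCn S n (Dmod S E) (Dset S E U) F (f \<circ> pfst S)"
    and f1: "isCn S n (Dmod S E) (Dset S E U) F f1"
  shows "isCn S n (Dmod S E) (Dset S E U) (Dmod S F) (chain_map f f1)"
proof -
  have "isCn S n (Dmod S E) (Dset S E U) (Dmod S F)
      (\<lambda>z. cpr S ((f \<circ> pfst S) z, cpr S (f1 z, psnd S (psnd S z))))"
    unfolding Dmod_def[of S F]
    by (rule isCn_pair[OF f isCn_pair[OF f1 clinear_isCn[OF clinear_Dmod_scalar[OF E]]]])
      (rule openin_Dset[OF E U])
  then show ?thesis by (simp add: chain_map_def)
qed

lemma C0_chain_map:
  assumes f: "cC0 S E U F f" and d: "is_der S E U F f f1"
  shows "cC0 S (Dmod S E) (Dset S E U) (Dmod S F) (chain_map f f1)"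
proof -
  have f1: "cC0 S (Dmod S E) (Dset S E U) F f1" using d by (simp add: is_der_def)
  have E: "E \<in> cM S" and U: "openin (mtop E) U" using C0_wf[OF f] by auto
  have "cC0 S (Dmod S E) (Dset S E U) F (f \<circ> pfst S)"
    by (rule C0_comp[OF clinear_C0_on[OF clinear_Dmod_base[OF E] openin_Dset[OF E U]] f pfst_Dset])
  then show ?thesis using isCn_chain_map[OF E U, where n = 0] f1 by simp
qed

lemma is_der_comp:
  assumes f: "cC0 S E U F f" and df: "is_der S E U F f f1" and dg: "is_der S F V H g g1"
    and fUV: "f ` U \<subseteq> V"
  shows "is_der S E U H (g \<circ> f) (g1 \<circ> chain_map f f1)"
  unfolding is_der_def
proof (intro conjI allI impI)
  show "cC0 S (Dmod S E) (Dset S E U) H (g1 \<circ> chain_map f f1)"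
    using C0_comp[OF C0_chain_map[OF f df] _ chain_map_Dset[OF f df fUV]] dg
    by (simp add: is_der_def)
  fix x v t assume "x \<in> U \<and> v \<in> mcar E \<and> madd E x (msmul E t v) \<in> U"
  then have xvt: "trip S x v t \<in> Dset S E U" by simp
  then have "trip S (f x) (f1 (trip S x v t)) t \<in> Dset S F V"
    using chain_map_Dset[OF f df fUV] chain_map_trip by (metis image_subset_iff)
  then show "madd H ((g \<circ> f) (madd E x (msmul E t v))) (mneg H ((g \<circ> f) x)) =
      msmul H t ((g1 \<circ> chain_map f f1) (trip S x v t))"
    using dg xvt is_der_expand[OF f df] unfolding is_der_def by auto
qed

lemma isCn_comp:
  "f ` U \<subseteq> V \<Longrightarrow> isCn S n E U F f \<Longrightarrow> isCn S n F V H g \<Longrightarrow> isCn S n E U H (g \<circ> f)"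
proof (induction n arbitrary: E F H U V f g)
  case 0
  then show ?case using C0_comp[of E U F f V H g] by (simp add: comp_def)
next
  case (Suc n)
  then obtain f1 g1 where f: "cC0 S E U F f" and df: "is_der S E U F f f1"
    and f1: "isCn S n (Dmod S E) (Dset S E U) F f1"
    and g: "cC0 S F V H g" and dg: "is_der S F V H g g1"
    and g1: "isCn S n (Dmod S F) (Dset S F V) H g1"
    using Suc.prems(2,3) unfolding isCn_Suc_iff_is_der by blast
  have E: "E \<in> cM S" and U: "openin (mtop E) U" using C0_wf[OF f] by auto
  have Do: "openin (mtop (Dmod S E)) (Dset S E U)" by (rule openin_Dset[OF E U])
  have fn: "isCn S n E U F f" using Suc.prems(2) by simp
  have "isCn S n (Dmod S E) (Dset S E U) F (f \<circ> pfst S)"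
    by (rule Suc.IH[OF pfst_Dset clinear_isCn[OF clinear_Dmod_base[OF E] Do] fn])
  then have "isCn S n (Dmod S E) (Dset S E U) (Dmod S F) (chain_map f f1)"
    by (rule isCn_chain_map[OF E U _ f1])
  then have "isCn S n (Dmod S E) (Dset S E U) H (g1 \<circ> chain_map f f1)"
    by (rule Suc.IH[OF chain_map_Dset[OF f df Suc.prems(1)] _ g1])
  then show ?case
    unfolding isCn_Suc_iff_is_der
    using C0_comp[OF f g Suc.prems(1)] is_der_comp[OF f df dg Suc.prems(1)] by blast
qed

end

theorem proposition4p5:
  fixes S :: "('k::comm_ring_1, 'u) c0c" and k :: enat
    and E F H :: "('k, 'u) tmod" and U V :: "'u set" and f g :: "'u \<Rightarrow> 'u"
  assumes "c0_concept S"
    and "E \<in> cM S" and "F \<in> cM S" and "H \<in> cM S"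
    and "openin (mtop E) U" and "openin (mtop F) V"
    and "f ` U \<subseteq> V"
    and "isCk S k E U F f" and "isCk S k F V H g"
  shows "isCk S k E U H (g \<circ> f)"
proof -
  interpret c0_concept S by fact
  \<comment> \<open>The hypotheses on E, F, H, U and V are already part of the C^0 conditions.\<close>
  show ?thesis
    using assms(8,9) by (cases k) (auto simp: isCk_def intro: isCn_comp[OF assms(7)])
qed

end
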